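(* Let $0<x_{\rm B}<x_{\rm A}$ and $v_E=\sqrt{2/x_{\rm A}}$. The function $T_D^R:\,]-\infty,v_E[\,\to\,]0,\infty[$ is strictly convex, with ${\rm d}^2T_D^R/{\rm d}v_{\rm A}^2>0$ everywhere.
   Context: Kepler problem on a line normalized as $\ddot x=-1/x^2$ ($x>0$), center ${\rm O}$ at $x=0$. For $v_{\rm A}<v_E$, $T_D^R(v_{\rm A})$ is the first time after $t_{\rm A}$ (minus $t_{\rm A}$) at which the solution with $x(t_{\rm A})=x_{\rm A}$, $\dot x(t_{\rm A})=v_{\rm A}$ reaches $x_{\rm B}$; this happens without collision with ${\rm O}$, possibly after a culmination (maximum of $x$) when $v_{\rm A}\ge0$. These are exactly the direct (collision-free) Keplerian arcs from ${\rm A}$ to ${\rm B}$. *)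

theory Defs
  imports "HOL-Analysis.Analysis"
begin

text \<open>Direct (collision-free) Keplerian arc for the normalized problem
  x'' = -1/x^2 on the half-line x > 0: starting at time tA from position xA with
  velocity vA, the solution reaches xB for the first time at time tA + T.\<close>
definition kepler_direct_arc :: "real \<Rightarrow> real \<Rightarrow> real \<Rightarrow> real \<Rightarrow> real \<Rightarrow> bool" where
  "kepler_direct_arc xA xB tA vA T \<longleftrightarrow> T > 0 \<and>
     (\<exists>x v :: real \<Rightarrow> real.
        x tA = xA \<and> v tA = vA \<and> x (tA + T) = xB \<and>
        (\<forall>t\<in>{tA..tA+T}. x t > 0 \<and>
            (x has_real_derivative v t) (at t within {tA..tA+T}) \<and>
            (v has_real_derivative (- 1 / (x t)^2)) (at t within {tA..tA+T})) \<and>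
        (\<forall>t\<in>{tA..<tA+T}. x t \<noteq> xB))"

definition T_DR :: "real \<Rightarrow> real \<Rightarrow> real \<Rightarrow> real \<Rightarrow> real" where
  "T_DR xA xB tA vA = (THE T. kepler_direct_arc xA xB tA vA T)"

definition strictly_convex_on :: "real set \<Rightarrow> (real \<Rightarrow> real) \<Rightarrow> bool" where
  "strictly_convex_on S f \<longleftrightarrow>
     (\<forall>x\<in>S. \<forall>y\<in>S. x \<noteq> y \<longrightarrow> (\<forall>u::real. 0 < u \<and> u < 1 \<longrightarrow>
        f ((1 - u) * x + u * y) < (1 - u) * f x + u * f y))"

end

theory Submission
  imports Defs
begin

text \<open>Put c = 2/xA and d = 2/xB - 2/xA. For the initial velocity a let m = a + sqrt(a^2 + d), so
  that m^2 - 2am = d (energy conservation between A and B), and D(s) = c + d s - m^2 s (1 - s).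
  Then x = 2/D(s), v = a - m s, with the clock dt/ds = 4m/D(s)^2, solves x'' = -1/x^2 and runs from
  A (s = 0) to B (s = 1) without meeting xB earlier. Hence T_D^R(a) = H(m(a)), where H(m) is the
  integral of 4m/D(s)^2 over [0,1]. Differentiating under the integral sign gives H' > 0 and
  H'' \<ge> 0, and directly m' > 0, m'' > 0, so (H \<circ> m)'' = H''(m) m'^2 + H'(m) m'' > 0. The arc is
  the only one, so T_D^R is well defined, by uniqueness for x'' = -1/x^2, whose right-hand side is
  Lipschitz on compact parts of the half-line.\<close>

lemma convex_real_contains_Icc:
  fixes S :: "real set"
  assumes "convex S" "x \<in> S" "y \<in> S"
  shows "{x..y} \<subseteq> S"
  using closed_segment_subset[OF assms(2,3,1)]
  by (simp add: closed_segment_eq_real_ivl split: if_splits)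

lemma MVT_convex:
  fixes f f' :: "real \<Rightarrow> real"
  assumes "convex S" and f': "\<And>x. x \<in> S \<Longrightarrow> (f has_real_derivative f' x) (at x)"
    and "x \<in> S" "y \<in> S" "x < y"
  obtains p where "x < p" "p < y" "f y - f x = (y - x) * f' p"
proof -
  have xy: "z \<in> S" if "x \<le> z" "z \<le> y" for z
    using convex_real_contains_Icc[OF assms(1,3,4)] that by auto
  have "continuous_on {x..y} f"
    using xy f' by (intro DERIV_atLeastAtMost_imp_continuous_on) blast
  moreover have "f differentiable (at z)" if "x < z" "z < y" for z
    using xy[of z] f'[of z] that unfolding real_differentiable_def by auto
  ultimately obtain l p where p: "x < p" "p < y" "DERIV f p :> l" "f y - f x = (y - x) * l"
    using MVT[OF \<open>x < y\<close>] by blast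
  moreover have "l = f' p"
    using DERIV_unique[OF p(3) f'[OF xy]] p by simp
  ultimately show ?thesis using that by blast
qed

lemma strictly_convex_on_if_deriv_strict_mono:
  fixes f f' :: "real \<Rightarrow> real"
  assumes S: "convex S"
    and f': "\<And>x. x \<in> S \<Longrightarrow> (f has_real_derivative f' x) (at x)"
    and mono: "\<And>x y. x \<in> S \<Longrightarrow> y \<in> S \<Longrightarrow> x < y \<Longrightarrow> f' x < f' y"
  shows "strictly_convex_on S f"
proof -
  have chord: "f ((1 - u) * x + u * y) < (1 - u) * f x + u * f y"
    if xy: "x \<in> S" "y \<in> S" "x < y" and u: "0 < u" "u < 1" for x y u
  proof -
    define z where "z = (1 - u) * x + u * y"
    have zx: "z - x = u * (y - x)" and yz: "y - z = (1 - u) * (y - x)"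
      unfolding z_def by (simp_all add: algebra_simps)
    have "0 < u * (y - x)" "0 < (1 - u) * (y - x)" using xy u by simp_all
    then have "x < z" "z < y" unfolding zx[symmetric] yz[symmetric] by simp_all
    then have "z \<in> S" using convex_real_contains_Icc[OF S xy(1,2)] by auto
    obtain p where p: "x < p" "p < z" "f z - f x = (z - x) * f' p"
      using MVT_convex[OF S f' xy(1) \<open>z \<in> S\<close> \<open>x < z\<close>] by blast
    obtain q where q: "z < q" "q < y" "f y - f z = (y - z) * f' q"
      using MVT_convex[OF S f' \<open>z \<in> S\<close> xy(2) \<open>z < y\<close>] by blast
    have "f' p < f' q"
      using p q convex_real_contains_Icc[OF S xy(1,2)] by (intro mono) auto
    moreover have "0 < (1 - u) * u * (y - x)" using xy u by simp
    ultimately have "(1 - u) * u * (y - x) * f' p < (1 - u) * u * (y - x) * f' q"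
      by (rule mult_strict_left_mono)
    then have "(1 - u) * (f z - f x) < u * (f y - f z)"
      unfolding p(3) q(3) zx yz by (simp add: algebra_simps)
    then show ?thesis unfolding z_def[symmetric] by (simp add: algebra_simps)
  qed
  show ?thesis
    unfolding strictly_convex_on_def
  proof (intro ballI impI allI)
    fix x y u :: real
    assume S: "x \<in> S" "y \<in> S" and "x \<noteq> y" and u: "0 < u \<and> u < 1"
    then consider "x < y" | "y < x" by linarith
    then show "f ((1 - u) * x + u * y) < (1 - u) * f x + u * f y"
    proof cases
      case 1
      then show ?thesis using chord S u by blast
    next
      case 2
      then have "f ((1 - (1 - u)) * y + (1 - u) * x) < (1 - (1 - u)) * f y + (1 - u) * f x"
        using chord[of y x "1 - u"] S u by simp
      then show ?thesis by (simp add: algebra_simps)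
    qed
  qed
qed

lemma strictly_convex_on_if_second_deriv_pos:
  fixes f f' f'' :: "real \<Rightarrow> real"
  assumes S: "convex S"
    and f': "\<And>x. x \<in> S \<Longrightarrow> (f has_real_derivative f' x) (at x)"
    and f'': "\<And>x. x \<in> S \<Longrightarrow> (f' has_real_derivative f'' x) (at x)"
    and pos: "\<And>x. x \<in> S \<Longrightarrow> f'' x > 0"
  shows "strictly_convex_on S f"
proof (rule strictly_convex_on_if_deriv_strict_mono[OF S f'])
  fix x y assume "x \<in> S" "y \<in> S" "x < y"
  then obtain p where "x < p" "p < y" "f' y - f' x = (y - x) * f'' p"
    using MVT_convex[OF S f''] by blast
  moreover have "p \<in> S" using convex_real_contains_Icc[OF S \<open>x \<in> S\<close> \<open>y \<in> S\<close>] calculation by auto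
  moreover have "(y - x) * f'' p > 0" using pos[OF \<open>p \<in> S\<close>] \<open>x < y\<close> by simp
  ultimately show "f' x < f' y" by linarith
qed

lemma gronwall_vanishing:
  fixes e e' :: "real \<Rightarrow> real"
  assumes "a \<le> b"
    and deriv: "\<And>t. t \<in> {a..b} \<Longrightarrow> (e has_real_derivative e' t) (at t within {a..b})"
    and growth: "\<And>t. t \<in> {a..b} \<Longrightarrow> e' t \<le> k * e t"
    and nonneg: "\<And>t. e t \<ge> 0" and start: "e a = 0"
    and s: "s \<in> {a..b}"
  shows "e s = 0"
proof -
  define f where "f t = e t * exp (- k * (t - a))" for t
  have f': "(f has_real_derivative (e' t - k * e t) * exp (- k * (t - a))) (at t within {a..b})"
    if "t \<in> {a..b}" for t
    unfolding f_def[abs_def] using deriv[OF that]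
    by (auto intro!: derivative_eq_intros simp: algebra_simps)
  have "f s \<le> f a"
  proof (rule DERIV_nonpos_imp_decreasing_open[of a s f])
    show "a \<le> s" using s by simp
    show "continuous_on {a..s} f"
      using DERIV_continuous_on[OF f'] continuous_on_subset s by fastforce
    fix t assume t: "a < t" "t < s"
    then have "at t within {a..b} = at t" using s by (intro at_within_Icc_at) auto
    then have "DERIV f t :> (e' t - k * e t) * exp (- k * (t - a))"
      using f'[of t] s t by auto
    moreover have "(e' t - k * e t) * exp (- k * (t - a)) \<le> 0"
      using growth[of t] s t by (simp add: mult_nonpos_nonneg)
    ultimately show "\<exists>y. DERIV f t :> y \<and> y \<le> 0" by blast
  qed
  then show ?thesis
    using nonneg[of s] start unfolding f_def by (simp add: mult_le_0_iff)
qed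

lemma lipschitz_on_inverse_square:
  fixes lo :: real
  assumes "lo > 0"
  shows "(2 / lo^3)-lipschitz_on {lo..} (\<lambda>x. - 1 / x^2)"
proof (rule lipschitz_onI)
  fix y z :: real assume "y \<in> {lo..}" "z \<in> {lo..}"
  then have y: "lo \<le> y" and z: "lo \<le> z" by auto
  have "y > 0" "z > 0" using assms y z by auto
  have "lo * lo^2 \<le> y * z^2" "lo^2 * lo \<le> y^2 * z"
    using assms y z by (auto intro!: mult_mono power_mono)
  then have "1 / (y * z^2) \<le> 1 / lo^3" "1 / (y^2 * z) \<le> 1 / lo^3"
    using assms \<open>y > 0\<close> \<open>z > 0\<close>
    by (auto intro!: divide_left_mono simp: power3_eq_cube power2_eq_square mult.assoc)
  then have bound: "(y + z) / (y^2 * z^2) \<le> 2 / lo^3"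
    using \<open>y > 0\<close> \<open>z > 0\<close> by (simp add: add_divide_distrib power2_eq_square)
  have "- 1 / y^2 - - 1 / z^2 = (y - z) * ((y + z) / (y^2 * z^2))"
    using \<open>y > 0\<close> \<open>z > 0\<close> by (simp add: field_simps power2_eq_square)
  then have "dist (- 1 / y^2) (- 1 / z^2) = \<bar>y - z\<bar> * ((y + z) / (y^2 * z^2))"
    using \<open>y > 0\<close> \<open>z > 0\<close> by (simp add: dist_real_def abs_mult)
  also have "\<dots> \<le> \<bar>y - z\<bar> * (2 / lo^3)"
    using mult_left_mono[OF bound abs_ge_zero] .
  finally show "dist (- 1 / y^2) (- 1 / z^2) \<le> 2 / lo^3 * dist y z"
    by (simp add: dist_real_def mult.commute)
qed (use assms in simp)

lemma second_order_ode_unique: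
  fixes x v y w F :: "real \<Rightarrow> real"
  assumes "a \<le> b" and lip: "L-lipschitz_on S F"
    and sol1: "\<And>t. t \<in> {a..b} \<Longrightarrow> x t \<in> S \<and>
      (x has_real_derivative v t) (at t within {a..b}) \<and>
      (v has_real_derivative F (x t)) (at t within {a..b})"
    and sol2: "\<And>t. t \<in> {a..b} \<Longrightarrow> y t \<in> S \<and>
      (y has_real_derivative w t) (at t within {a..b}) \<and>
      (w has_real_derivative F (y t)) (at t within {a..b})"
    and "x a = y a" "v a = w a"
    and t: "t \<in> {a..b}"
  shows "x t = y t"
proof -
  txt \<open>The squared phase-space distance e satisfies e' \<le> (1 + L) e, so Gronwall forces e = 0.\<close>
  define e where "e t = (x t - y t)^2 + (v t - w t)^2" for t
  define e' where
    "e' t = 2 * (x t - y t) * (v t - w t) + 2 * (v t - w t) * (F (x t) - F (y t))" for t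
  have deriv: "(e has_real_derivative e' t) (at t within {a..b})" if "t \<in> {a..b}" for t
    unfolding e_def[abs_def] e'_def using sol1[OF that] sol2[OF that]
    by (auto intro!: derivative_eq_intros simp: algebra_simps)
  have growth: "e' t \<le> (1 + L) * e t" if "t \<in> {a..b}" for t
  proof -
    define p q r where "p = x t - y t" and "q = v t - w t" and "r = F (x t) - F (y t)"
    have L: "L \<ge> 0" using lipschitz_on_nonneg[OF lip] .
    have r: "\<bar>r\<bar> \<le> L * \<bar>p\<bar>"
      using lipschitz_onD[OF lip] sol1[OF that] sol2[OF that] unfolding p_def r_def dist_real_def
      by blast
    have "2 * q * r \<le> 2 * \<bar>q\<bar> * \<bar>r\<bar>" by (simp add: abs_mult[symmetric])
    also have "\<dots> \<le> 2 * \<bar>q\<bar> * (L * \<bar>p\<bar>)" using r by (simp add: mult_left_mono)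
    also have "\<dots> = L * (2 * \<bar>p\<bar> * \<bar>q\<bar>)" by simp
    also have "\<dots> \<le> L * (p^2 + q^2)"
      using mult_left_mono[OF sum_squares_bound[of "\<bar>p\<bar>" "\<bar>q\<bar>"] L] by simp
    finally have "2 * q * r \<le> L * (p^2 + q^2)" .
    moreover have "2 * p * q \<le> p^2 + q^2" by (rule sum_squares_bound)
    ultimately show ?thesis
      unfolding e'_def e_def p_def[symmetric] q_def[symmetric] r_def[symmetric]
      by (simp add: algebra_simps)
  qed
  have "e a = 0" unfolding e_def using assms by simp
  then have "e t = 0"
    using gronwall_vanishing[OF \<open>a \<le> b\<close> deriv growth _ _ t] unfolding e_def by simp
  then show ?thesis unfolding e_def by simp
qed

lemma continuous_on_Icc_pos_lower_bound:
  fixes f :: "real \<Rightarrow> real"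
  assumes "a \<le> b" "continuous_on {a..b} f" "\<And>t. t \<in> {a..b} \<Longrightarrow> f t > 0"
  obtains lo where "lo > 0" "\<And>t. t \<in> {a..b} \<Longrightarrow> lo \<le> f t"
proof -
  obtain s where "s \<in> {a..b}" "\<And>t. t \<in> {a..b} \<Longrightarrow> f s \<le> f t"
    using continuous_attains_inf[OF compact_Icc _ assms(2)] assms(1) by auto
  then show ?thesis using that assms(3) by blast
qed

lemma kepler_ode_unique:
  fixes x v y w :: "real \<Rightarrow> real"
  assumes "a \<le> b"
    and sol1: "\<forall>t\<in>{a..b}. x t > 0 \<and> (x has_real_derivative v t) (at t within {a..b}) \<and>
      (v has_real_derivative - 1 / (x t)^2) (at t within {a..b})"
    and sol2: "\<forall>t\<in>{a..b}. y t > 0 \<and> (y has_real_derivative w t) (at t within {a..b}) \<and>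
      (w has_real_derivative - 1 / (y t)^2) (at t within {a..b})"
    and "x a = y a" "v a = w a" "t \<in> {a..b}"
  shows "x t = y t"
proof -
  have "continuous_on {a..b} x" "continuous_on {a..b} y"
    using DERIV_continuous_on[of "{a..b}" x v] DERIV_continuous_on[of "{a..b}" y w] sol1 sol2
    by blast+
  then have "continuous_on {a..b} (\<lambda>t. min (x t) (y t))"
    by (rule continuous_on_min)
  moreover have "min (x t) (y t) > 0" if "t \<in> {a..b}" for t
    using sol1 sol2 that by simp
  ultimately obtain lo where "lo > 0" and lo: "\<And>t. t \<in> {a..b} \<Longrightarrow> lo \<le> min (x t) (y t)"
    using continuous_on_Icc_pos_lower_bound \<open>a \<le> b\<close> by blast
  show ?thesis
  proof (rule second_order_ode_unique[where x = x and v = v and y = y and w = w,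
        OF \<open>a \<le> b\<close> lipschitz_on_inverse_square[OF \<open>lo > 0\<close>]])
    show "x t \<in> {lo..} \<and> (x has_real_derivative v t) (at t within {a..b}) \<and>
      (v has_real_derivative - 1 / (x t)^2) (at t within {a..b})" if "t \<in> {a..b}" for t
      using sol1 lo[OF that] that by auto
    show "y t \<in> {lo..} \<and> (y has_real_derivative w t) (at t within {a..b}) \<and>
      (w has_real_derivative - 1 / (y t)^2) (at t within {a..b})" if "t \<in> {a..b}" for t
      using sol2 lo[OF that] that by auto
  qed (use assms in auto)
qed

lemma kepler_direct_arc_not_less:
  assumes arc1: "kepler_direct_arc xA xB tA vA T1" and arc2: "kepler_direct_arc xA xB tA vA T2"
  shows "\<not> T1 < T2"
proof
  assume "T1 < T2"
  let ?I = "{tA..tA + T1}"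
  obtain x1 v1 where "T1 > 0" "x1 tA = xA" "v1 tA = vA" "x1 (tA + T1) = xB"
    and sol1: "\<forall>t\<in>?I. x1 t > 0 \<and> (x1 has_real_derivative v1 t) (at t within ?I) \<and>
      (v1 has_real_derivative (- 1 / (x1 t)^2)) (at t within ?I)"
    using arc1 unfolding kepler_direct_arc_def by blast
  obtain x2 v2 where "x2 tA = xA" "v2 tA = vA" and first: "\<forall>t\<in>{tA..<tA + T2}. x2 t \<noteq> xB"
    and sol2: "\<forall>t\<in>{tA..tA + T2}. x2 t > 0 \<and>
      (x2 has_real_derivative v2 t) (at t within {tA..tA + T2}) \<and>
      (v2 has_real_derivative (- 1 / (x2 t)^2)) (at t within {tA..tA + T2})"
    using arc2 unfolding kepler_direct_arc_def by blast
  have "?I \<subseteq> {tA..tA + T2}" using \<open>T1 < T2\<close> by auto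
  then have "\<forall>t\<in>?I. x2 t > 0 \<and> (x2 has_real_derivative v2 t) (at t within ?I) \<and>
      (v2 has_real_derivative (- 1 / (x2 t)^2)) (at t within ?I)"
    using sol2 by (blast intro: DERIV_subset)
  then have "x1 (tA + T1) = x2 (tA + T1)"
    using kepler_ode_unique[OF _ sol1] \<open>T1 > 0\<close> \<open>x1 tA = xA\<close> \<open>x2 tA = xA\<close> \<open>v1 tA = vA\<close> \<open>v2 tA = vA\<close>
    by simp
  then show False
    using first \<open>x1 (tA + T1) = xB\<close> \<open>T1 > 0\<close> \<open>T1 < T2\<close> by auto
qed

lemma kepler_direct_arc_unique:
  "kepler_direct_arc xA xB tA vA T1 \<Longrightarrow> kepler_direct_arc xA xB tA vA T2 \<Longrightarrow> T1 = T2"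
  using kepler_direct_arc_not_less by (meson linorder_neq_iff)

lemma deriv_pos_imp_strict_mono_on:
  fixes f f' :: "real \<Rightarrow> real"
  assumes "\<And>s. a < s \<Longrightarrow> s < b \<Longrightarrow> (f has_real_derivative f' s) (at s) \<and> f' s > 0"
  shows "strict_mono_on {a<..<b} f"
proof (rule strict_mono_onI)
  fix s t assume "s \<in> {a<..<b}" "t \<in> {a<..<b}" "s < t"
  then show "f s < f t"
  proof (intro DERIV_pos_imp_increasing[OF \<open>s < t\<close>])
    fix z assume "s \<le> z" "z \<le> t"
    then have "a < z" "z < b" using \<open>s \<in> {a<..<b}\<close> \<open>t \<in> {a<..<b}\<close> by auto
    then show "\<exists>l. DERIV f z :> l \<and> l > 0" using assms by blast
  qed
qed

lemma inv_into_has_real_derivative: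
  fixes f f' :: "real \<Rightarrow> real"
  assumes deriv: "\<And>s. a < s \<Longrightarrow> s < b \<Longrightarrow> (f has_real_derivative f' s) (at s) \<and> f' s > 0"
    and "a < s" "s < b"
  shows "(inv_into {a<..<b} f has_real_derivative inverse (f' s)) (at (f s))"
proof -
  define g where "g = inv_into {a<..<b} f"
  have mono: "strict_mono_on {a<..<b} f"
    using deriv by (rule deriv_pos_imp_strict_mono_on)
  have g_f: "g (f z) = z" if "a < z" "z < b" for z
    unfolding g_def using that strict_mono_on_imp_inj_on[OF mono] by (intro inv_into_f_f) auto
  define p q where "p = (a + s) / 2" and "q = (s + b) / 2"
  have pq: "a < p" "p < s" "s < q" "q < b"
    using \<open>a < s\<close> \<open>s < b\<close> unfolding p_def q_def by auto
  have inside: "a < z" "z < b" if "p \<le> z" "z \<le> q" for z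
    using pq that by linarith+
  have cont: "isCont f z" if "p \<le> z" "z \<le> q" for z
    using deriv[OF inside[OF that]] DERIV_isCont by blast
  have "isCont g (f s)"
    by (rule isCont_inverse_function2[of p s q]) (use pq g_f[OF inside] cont in auto)
  moreover have "f (g y) = y" if y: "f p < y" "y < f q" for y
  proof -
    have "continuous_on {p..q} f" by (intro continuous_at_imp_continuous_on) (use cont in auto)
    then obtain z where "z \<in> {p..q}" "f z = y"
      using IVT'[of f p y q] y pq by force
    then show ?thesis using g_f[OF inside] by auto
  qed
  moreover have "f p < f s" "f s < f q"
    using strict_mono_onD[OF mono] pq \<open>a < s\<close> \<open>s < b\<close> by auto
  ultimately show ?thesis
    using deriv[OF \<open>a < s\<close> \<open>s < b\<close>] g_f[OF \<open>a < s\<close> \<open>s < b\<close>] unfolding g_def[symmetric]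
    by (intro DERIV_inverse_function[where a = "f p" and b = "f q"]) auto
qed

lemma deriv_pos_imp_inverse:
  fixes f f' :: "real \<Rightarrow> real"
  assumes deriv: "\<And>s. a < s \<Longrightarrow> s < b \<Longrightarrow> (f has_real_derivative f' s) (at s) \<and> f' s > 0"
    and "a < p" "p \<le> q" "q < b"
  obtains g where "\<And>s. s \<in> {p..q} \<Longrightarrow> g (f s) = s"
    and "\<And>y. y \<in> {f p..f q} \<Longrightarrow>
      g y \<in> {p..q} \<and> f (g y) = y \<and> (g has_real_derivative inverse (f' (g y))) (at y)"
proof
  let ?g = "inv_into {a<..<b} f"
  have g_f: "?g (f s) = s" if "s \<in> {p..q}" for s
    using that assms strict_mono_on_imp_inj_on[OF deriv_pos_imp_strict_mono_on[OF deriv]]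
    by (intro inv_into_f_f) auto
  then show "?g (f s) = s" if "s \<in> {p..q}" for s using that .
  fix y assume "y \<in> {f p..f q}"
  moreover have "continuous_on {p..q} f"
  proof (intro continuous_at_imp_continuous_on ballI)
    fix s assume "s \<in> {p..q}"
    then have "a < s" "s < b" using assms by auto
    then show "isCont f s" using deriv DERIV_isCont by blast
  qed
  ultimately obtain s where s: "s \<in> {p..q}" "f s = y"
    using IVT'[of f p y q] \<open>p \<le> q\<close> by auto
  then have "a < s" "s < b" using assms by auto
  then have "(?g has_real_derivative inverse (f' s)) (at (f s))"
    by (intro inv_into_has_real_derivative deriv)
  then show "?g y \<in> {p..q} \<and> f (?g y) = y \<and> (?g has_real_derivative inverse (f' (?g y))) (at y)"
    using g_f[OF s(1)] s by simp
qed

lemma second_order_ode_reparametrization: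
  fixes \<tau> G X V F :: "real \<Rightarrow> real"
  assumes \<tau>: "\<And>s. a < s \<Longrightarrow> s < b \<Longrightarrow> (\<tau> has_real_derivative G s) (at s) \<and> G s > 0"
    and "a < p" "p \<le> q" "q < b"
    and X: "\<And>s. s \<in> {p..q} \<Longrightarrow> (X has_real_derivative V s * G s) (at s)"
    and V: "\<And>s. s \<in> {p..q} \<Longrightarrow> (V has_real_derivative F (X s) * G s) (at s)"
  obtains \<sigma> where "\<And>s. s \<in> {p..q} \<Longrightarrow> \<sigma> (\<tau> s) = s"
    and "\<And>t. t \<in> {\<tau> p..\<tau> q} \<Longrightarrow> \<sigma> t \<in> {p..q} \<and> \<tau> (\<sigma> t) = t \<and>
      ((\<lambda>t. X (\<sigma> t)) has_real_derivative V (\<sigma> t)) (at t) \<and>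
      ((\<lambda>t. V (\<sigma> t)) has_real_derivative F (X (\<sigma> t))) (at t)"
proof -
  obtain \<sigma> where \<sigma>_\<tau>: "\<And>s. s \<in> {p..q} \<Longrightarrow> \<sigma> (\<tau> s) = s"
    and \<sigma>: "\<And>t. t \<in> {\<tau> p..\<tau> q} \<Longrightarrow> \<sigma> t \<in> {p..q} \<and> \<tau> (\<sigma> t) = t \<and>
      (\<sigma> has_real_derivative inverse (G (\<sigma> t))) (at t)"
    using deriv_pos_imp_inverse[OF \<tau> \<open>a < p\<close> \<open>p \<le> q\<close> \<open>q < b\<close>] by blast
  have "((\<lambda>t. X (\<sigma> t)) has_real_derivative V (\<sigma> t)) (at t) \<and>
    ((\<lambda>t. V (\<sigma> t)) has_real_derivative F (X (\<sigma> t))) (at t)" if t: "t \<in> {\<tau> p..\<tau> q}" for t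
  proof -
    have "\<sigma> t \<in> {p..q}" using \<sigma>[OF t] by blast
    then have "G (\<sigma> t) \<noteq> 0" using \<tau>[of "\<sigma> t"] \<open>a < p\<close> \<open>q < b\<close> by force
    then show ?thesis
      using DERIV_chain2[OF X[OF \<open>\<sigma> t \<in> {p..q}\<close>] conjunct2[OF conjunct2[OF \<sigma>[OF t]]]]
        DERIV_chain2[OF V[OF \<open>\<sigma> t \<in> {p..q}\<close>] conjunct2[OF conjunct2[OF \<sigma>[OF t]]]]
      by (simp add: mult.assoc)
  qed
  then show ?thesis using that \<sigma>_\<tau> \<sigma> by blast
qed

lemma second_order_ode_time_change:
  fixes G X V F :: "real \<Rightarrow> real"
  assumes "p < q" and G_cont: "continuous_on {p..q} G" and G_pos: "\<And>s. s \<in> {p..q} \<Longrightarrow> G s > 0"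
    and X: "\<And>s. s \<in> {p..q} \<Longrightarrow> (X has_real_derivative V s * G s) (at s)"
    and V: "\<And>s. s \<in> {p..q} \<Longrightarrow> (V has_real_derivative F (X s) * G s) (at s)"
  defines "T \<equiv> integral {p..q} G"
  obtains \<sigma> where "\<sigma> t\<^sub>0 = p" "\<sigma> (t\<^sub>0 + T) = q"
    and "\<And>t. t \<in> {t\<^sub>0..t\<^sub>0 + T} \<Longrightarrow> \<sigma> t \<in> {p..q} \<and> (\<sigma> t = q \<longrightarrow> t = t\<^sub>0 + T) \<and>
      ((\<lambda>t. X (\<sigma> t)) has_real_derivative V (\<sigma> t)) (at t) \<and>
      ((\<lambda>t. V (\<sigma> t)) has_real_derivative F (X (\<sigma> t))) (at t)"
proof -
  txt \<open>Extending G constantly beyond [p, q] makes the clock t = \<tau>(s) differentiable on an open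
    interval around [p, q].\<close>
  define G' where "G' s = G (max p (min q s))" for s
  have G'_pos: "G' s > 0" for s
    unfolding G'_def using G_pos \<open>p < q\<close> by simp
  have G'_cont: "continuous_on UNIV G'"
    unfolding G'_def using G_cont \<open>p < q\<close>
    by (intro continuous_on_compose2[OF G_cont] continuous_intros) auto
  define \<tau> where "\<tau> s = t\<^sub>0 + (integral {p - 1..s} G' - integral {p - 1..p} G')" for s
  have \<tau>: "(\<tau> has_real_derivative G' s) (at s) \<and> G' s > 0" if "p - 1 < s" "s < q + 1" for s
  proof -
    have "((\<lambda>s. integral {p - 1..s} G') has_real_derivative G' s) (at s within {p - 1..q + 1})"
      using that G'_cont by (intro integral_has_real_derivative) (auto intro: continuous_on_subset)
    moreover have "at s within {p - 1..q + 1} = at s" using that by (intro at_within_Icc_at) auto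
    ultimately show ?thesis
      unfolding \<tau>_def using G'_pos by (auto intro!: derivative_eq_intros)
  qed
  have \<tau>p: "\<tau> p = t\<^sub>0" unfolding \<tau>_def by simp
  have \<tau>q: "\<tau> q = t\<^sub>0 + T"
  proof -
    have "integral {p - 1..p} G' + integral {p..q} G' = integral {p - 1..q} G'"
      using G'_cont \<open>p < q\<close>
      by (intro Henstock_Kurzweil_Integration.integral_combine integrable_continuous_real)
        (auto intro: continuous_on_subset)
    moreover have "integral {p..q} G' = T"
      unfolding T_def G'_def by (intro integral_cong) auto
    ultimately show ?thesis unfolding \<tau>_def by simp
  qed
  have "G' s = G s" if "s \<in> {p..q}" for s
    unfolding G'_def using that by simp
  then have X': "\<And>s. s \<in> {p..q} \<Longrightarrow> (X has_real_derivative V s * G' s) (at s)"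
    and V': "\<And>s. s \<in> {p..q} \<Longrightarrow> (V has_real_derivative F (X s) * G' s) (at s)"
    using X V by auto
  obtain \<sigma> where \<sigma>_\<tau>: "\<And>s. s \<in> {p..q} \<Longrightarrow> \<sigma> (\<tau> s) = s"
    and \<sigma>: "\<And>t. t \<in> {\<tau> p..\<tau> q} \<Longrightarrow> \<sigma> t \<in> {p..q} \<and> \<tau> (\<sigma> t) = t \<and>
      ((\<lambda>t. X (\<sigma> t)) has_real_derivative V (\<sigma> t)) (at t) \<and>
      ((\<lambda>t. V (\<sigma> t)) has_real_derivative F (X (\<sigma> t))) (at t)"
    using second_order_ode_reparametrization[where a = "p - 1" and b = "q + 1" and p = p and q = q,
        OF \<tau> _ _ _ X' V'] \<open>p < q\<close>
    by auto
  have "\<sigma> t\<^sub>0 = p" "\<sigma> (t\<^sub>0 + T) = q"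
    using \<sigma>_\<tau>[of p] \<sigma>_\<tau>[of q] \<tau>p \<tau>q \<open>p < q\<close> by auto
  moreover have "\<sigma> t \<in> {p..q} \<and> (\<sigma> t = q \<longrightarrow> t = t\<^sub>0 + T) \<and>
      ((\<lambda>t. X (\<sigma> t)) has_real_derivative V (\<sigma> t)) (at t) \<and>
      ((\<lambda>t. V (\<sigma> t)) has_real_derivative F (X (\<sigma> t))) (at t)"
    if "t \<in> {t\<^sub>0..t\<^sub>0 + T}" for t
  proof -
    have "t \<in> {\<tau> p..\<tau> q}" using that \<tau>p \<tau>q by simp
    from \<sigma>[OF this] show ?thesis using \<tau>q by auto
  qed
  ultimately show ?thesis using that by blast
qed

lemma integral_pos_if_ge_const:
  fixes f :: "real \<Rightarrow> real"
  assumes "a < b" "e > 0" "f integrable_on {a..b}" "\<And>s. s \<in> {a..b} \<Longrightarrow> e \<le> f s"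
  shows "integral {a..b} f > 0"
proof -
  have "integral {a..b} (\<lambda>s. e) \<le> integral {a..b} f"
    using assms by (intro integral_le) auto
  moreover have "integral {a..b} (\<lambda>s. e) > 0" using assms by simp
  ultimately show ?thesis by linarith
qed

lemma parametric_integral_has_real_derivative:
  fixes f f' :: "real \<Rightarrow> real \<Rightarrow> real"
  assumes "open U" "convex U" "m \<in> U"
    and deriv: "\<And>m s. m \<in> U \<Longrightarrow> s \<in> {a..b} \<Longrightarrow> ((\<lambda>m. f m s) has_real_derivative f' m s) (at m)"
    and int: "\<And>m. m \<in> U \<Longrightarrow> f m integrable_on {a..b}"
    and cont: "continuous_on (U \<times> {a..b}) (\<lambda>(m, s). f' m s)"
  shows "((\<lambda>m. integral {a..b} (f m)) has_real_derivative integral {a..b} (f' m)) (at m)"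
proof -
  have "((\<lambda>m. integral (cbox a b) (f m)) has_real_derivative integral (cbox a b) (f' m))
      (at m within U)"
    using assms by (intro leibniz_rule_field_derivative) (auto intro: has_field_derivative_at_within)
  then show ?thesis using at_within_open[OF \<open>m \<in> U\<close> \<open>open U\<close>] by simp
qed

definition kepler_m :: "real \<Rightarrow> real \<Rightarrow> real" where
  "kepler_m d a = a + sqrt (a^2 + d)"

lemma sqrt_square_add_gt_abs: "d > 0 \<Longrightarrow> \<bar>a\<bar> < sqrt (a^2 + d)"
  by (metis add.commute less_add_same_cancel2 real_sqrt_abs real_sqrt_less_iff)

lemma kepler_m_equation: "d \<ge> 0 \<Longrightarrow> (kepler_m d a)^2 - 2 * a * kepler_m d a = d"
  unfolding kepler_m_def by (simp add: algebra_simps power2_eq_square add_nonneg_nonneg[of "a * a"])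

lemma kepler_m_has_derivative:
  assumes "d > 0"
  shows "(kepler_m d has_real_derivative 1 + a / sqrt (a^2 + d)) (at a)"
proof -
  have "sqrt (a^2 + d) > 0" using sqrt_square_add_gt_abs[OF assms, of a] by linarith
  then show ?thesis
    unfolding kepler_m_def[abs_def]
    by (auto intro!: derivative_eq_intros simp: field_simps)
qed

lemma kepler_m_derivative_has_derivative:
  assumes "d > 0"
  shows "((\<lambda>a. 1 + a / sqrt (a^2 + d)) has_real_derivative d / ((a^2 + d) * sqrt (a^2 + d))) (at a)"
proof -
  have "sqrt (a^2 + d) > 0" using sqrt_square_add_gt_abs[OF assms, of a] by linarith
  moreover have "(sqrt (a^2 + d))^2 = a^2 + d" using assms by simp
  ultimately show ?thesis
    by (auto intro!: derivative_eq_intros simp: field_simps power2_eq_square)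
qed

lemma kepler_m_derivative_pos:
  assumes "d > 0"
  shows "1 + a / sqrt (a^2 + d) > 0"
proof -
  have "sqrt (a^2 + d) > 0" "- sqrt (a^2 + d) < a"
    using sqrt_square_add_gt_abs[OF assms, of a] by linarith+
  then have "-1 < a / sqrt (a^2 + d)" by (simp add: less_divide_eq)
  then show ?thesis by simp
qed

lemma kepler_m_bounds:
  assumes "c > 0" "d > 0" "a < sqrt c"
  shows "0 < kepler_m d a" "kepler_m d a < sqrt c + sqrt (c + d)"
proof -
  show "0 < kepler_m d a"
    unfolding kepler_m_def using sqrt_square_add_gt_abs[OF \<open>d > 0\<close>, of a] by linarith
  have "kepler_m d a < kepler_m d (sqrt c)"
    using kepler_m_has_derivative[OF \<open>d > 0\<close>] kepler_m_derivative_pos[OF \<open>d > 0\<close>]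
    by (intro DERIV_pos_imp_increasing[OF \<open>a < sqrt c\<close>]) blast
  then show "kepler_m d a < sqrt c + sqrt (c + d)"
    unfolding kepler_m_def using \<open>c > 0\<close> by simp
qed

definition kepler_D :: "real \<Rightarrow> real \<Rightarrow> real \<Rightarrow> real \<Rightarrow> real" where
  "kepler_D c d m s = c + d * s - m^2 * s * (1 - s)"

definition time_density :: "real \<Rightarrow> real \<Rightarrow> real \<Rightarrow> real \<Rightarrow> real" where
  "time_density c d m s = 4 * m / (kepler_D c d m s)^2"

definition travel_time :: "real \<Rightarrow> real \<Rightarrow> real \<Rightarrow> real" where
  "travel_time c d m = integral {0..1} (time_density c d m)"

lemma kepler_D_pos:
  assumes "c > 0" "d > 0" "\<bar>m\<bar> < sqrt c + sqrt (c + d)" "s \<in> {0..1}"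
  shows "kepler_D c d m s > 0"
proof -
  define M where "M = sqrt c + sqrt (c + d)"
  have "(sqrt c)^2 = c" "(sqrt (c + d))^2 = c + d" using assms by auto
  then have D: "kepler_D c d m s = (sqrt c - M * s)^2 + (M^2 - m^2) * (s * (1 - s))"
    unfolding kepler_D_def M_def by (simp add: algebra_simps power2_eq_square)
  have "\<bar>m\<bar>^2 < M^2"
    using assms unfolding M_def by (intro power_strict_mono) auto
  then have "m^2 < M^2" by simp
  consider "s = 0" | "s = 1" | "0 < s \<and> s < 1" using assms by fastforce
  then show ?thesis
  proof cases
    case 3
    then have "(M^2 - m^2) * (s * (1 - s)) > 0" using \<open>m^2 < M^2\<close> by simp
    then show ?thesis unfolding D by (simp add: add_nonneg_pos)
  qed (use assms in \<open>simp_all add: kepler_D_def\<close>)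
qed

lemma kepler_D_le:
  assumes "d \<ge> 0" "s \<in> {0..1}"
  shows "kepler_D c d m s \<le> c + d"
proof -
  have "d * s \<le> d" "m^2 * s * (1 - s) \<ge> 0" using assms by (auto simp: mult_left_le)
  then show ?thesis unfolding kepler_D_def by linarith
qed

lemma kepler_curve_has_derivative:
  assumes "m^2 - 2 * a * m = d" "kepler_D c d m s \<noteq> 0"
  shows "((\<lambda>s. 2 / kepler_D c d m s) has_real_derivative (a - m * s) * time_density c d m s) (at s)"
    and "((\<lambda>s. a - m * s) has_real_derivative - 1 / (2 / kepler_D c d m s)^2 * time_density c d m s) (at s)"
proof -
  have "(kepler_D c d m has_real_derivative d - m^2 * (1 - 2 * s)) (at s)"
    unfolding kepler_D_def[abs_def] by (auto intro!: derivative_eq_intros simp: algebra_simps)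
  then have "((\<lambda>s. 2 / kepler_D c d m s) has_real_derivative
      - 2 * (d - m^2 * (1 - 2 * s)) / (kepler_D c d m s)^2) (at s)"
    using assms(2) by (auto intro!: derivative_eq_intros simp: power2_eq_square)
  moreover have "- 2 * (d - m^2 * (1 - 2 * s)) / (kepler_D c d m s)^2 =
      (a - m * s) * time_density c d m s"
    unfolding time_density_def assms(1)[symmetric] by (simp add: field_simps power2_eq_square)
  ultimately show "((\<lambda>s. 2 / kepler_D c d m s) has_real_derivative (a - m * s) * time_density c d m s) (at s)"
    by simp
  have "- 1 / (2 / kepler_D c d m s)^2 * time_density c d m s = - m"
    using assms(2) unfolding time_density_def by (simp add: field_simps power2_eq_square)
  then show "((\<lambda>s. a - m * s) has_real_derivative - 1 / (2 / kepler_D c d m s)^2 * time_density c d m s) (at s)"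
    by (auto intro!: derivative_eq_intros)
qed

lemma continuous_on_time_density:
  assumes "\<And>s. s \<in> S \<Longrightarrow> kepler_D c d m s \<noteq> 0"
  shows "continuous_on S (time_density c d m)"
  unfolding time_density_def[abs_def] kepler_D_def
  using assms unfolding kepler_D_def by (intro continuous_intros) auto

lemma travel_time_pos:
  assumes "c > 0" "d > 0" "0 < m" "m < sqrt c + sqrt (c + d)"
  shows "travel_time c d m > 0"
proof -
  have D: "0 < kepler_D c d m s" "kepler_D c d m s \<le> c + d" if "s \<in> {0..1}" for s
    using kepler_D_pos[of c d m s] kepler_D_le[of d s c m] assms that by auto
  have "time_density c d m integrable_on {0..1}"
    using D by (intro integrable_continuous_real continuous_on_time_density) force
  moreover have "4 * m / (c + d)^2 \<le> time_density c d m s" if "s \<in> {0..1}" for s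
    unfolding time_density_def using D[OF that] assms
    by (intro divide_left_mono power_mono mult_pos_pos) auto
  ultimately show ?thesis
    unfolding travel_time_def using assms
    by (intro integral_pos_if_ge_const[of 0 1 "4 * m / (c + d)^2"]) auto
qed

lemma kepler_direct_arc_travel_time:
  assumes c: "c > 0" and d: "d > 0" and a: "a < sqrt c"
  shows "kepler_direct_arc (2 / c) (2 / (c + d)) tA a (travel_time c d (kepler_m d a))"
proof -
  define m where "m = kepler_m d a"
  define T where "T = travel_time c d m"
  have m: "0 < m" "m < sqrt c + sqrt (c + d)" and md: "m^2 - 2 * a * m = d"
    using kepler_m_bounds[OF c d a] kepler_m_equation[of d a] d unfolding m_def by auto
  have D: "kepler_D c d m s > 0" if "s \<in> {0..1}" for s
    using kepler_D_pos[OF c d _ that] m by simp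
  have cont: "continuous_on {0..1} (time_density c d m)"
    using D by (intro continuous_on_time_density) (metis less_irrefl)
  have pos: "time_density c d m s > 0" if "s \<in> {0..1}" for s
    unfolding time_density_def using D[OF that] m by simp
  have curve: "((\<lambda>s. 2 / kepler_D c d m s) has_real_derivative (a - m * s) * time_density c d m s) (at s)"
    "((\<lambda>s. a - m * s) has_real_derivative - 1 / (2 / kepler_D c d m s)^2 * time_density c d m s) (at s)"
    if "s \<in> {0..1}" for s
    using kepler_curve_has_derivative[OF md] D[OF that] by auto
  obtain \<sigma> where "\<sigma> tA = 0" "\<sigma> (tA + T) = 1"
    and \<sigma>: "\<And>t. t \<in> {tA..tA + T} \<Longrightarrow> \<sigma> t \<in> {0..1} \<and> (\<sigma> t = 1 \<longrightarrow> t = tA + T) \<and>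
      ((\<lambda>t. 2 / kepler_D c d m (\<sigma> t)) has_real_derivative a - m * \<sigma> t) (at t) \<and>
      ((\<lambda>t. a - m * \<sigma> t) has_real_derivative - 1 / (2 / kepler_D c d m (\<sigma> t))^2) (at t)"
    using second_order_ode_time_change[where F = "\<lambda>x. - 1 / x^2",
        OF zero_less_one cont pos curve, where t\<^sub>0 = tA]
    unfolding T_def travel_time_def by blast
  define x where "x t = 2 / kepler_D c d m (\<sigma> t)" for t
  define v where "v t = a - m * \<sigma> t" for t
  have "T > 0" unfolding T_def using travel_time_pos[OF c d m] .
  have sol: "x t > 0 \<and> (x has_real_derivative v t) (at t within {tA..tA + T}) \<and>
      (v has_real_derivative - 1 / (x t)^2) (at t within {tA..tA + T})"
    if "t \<in> {tA..tA + T}" for t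
  proof -
    have "x t > 0" unfolding x_def using D \<sigma>[OF that] by simp
    moreover have "(x has_real_derivative v t) (at t)" "(v has_real_derivative - 1 / (x t)^2) (at t)"
      unfolding x_def[abs_def] v_def[abs_def] using \<sigma>[OF that] by simp_all
    ultimately show ?thesis by (simp add: has_field_derivative_at_within)
  qed
  have first: "x t \<noteq> 2 / (c + d)" if "t \<in> {tA..<tA + T}" for t
  proof
    assume "x t = 2 / (c + d)"
    have "t \<in> {tA..tA + T}" using that by simp
    note \<sigma>t = \<sigma>[OF this]
    then have "kepler_D c d m (\<sigma> t) = c + d"
      using \<open>x t = 2 / (c + d)\<close> c d unfolding x_def by simp
    then have "(\<sigma> t - 1) * (d + m^2 * \<sigma> t) = 0"
      unfolding kepler_D_def by (simp add: algebra_simps)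
    moreover have "d + m^2 * \<sigma> t > 0"
      using \<sigma>t d by (simp add: add_pos_nonneg)
    ultimately have "\<sigma> t = 1" by simp
    then show False using \<sigma>t that by simp
  qed
  have "x tA = 2 / c" "v tA = a" "x (tA + T) = 2 / (c + d)"
    unfolding x_def v_def kepler_D_def using \<open>\<sigma> tA = 0\<close> \<open>\<sigma> (tA + T) = 1\<close> by simp_all
  with \<open>T > 0\<close> sol first have "kepler_direct_arc (2 / c) (2 / (c + d)) tA a T"
    unfolding kepler_direct_arc_def by (intro conjI exI[of _ x] exI[of _ v] ballI) auto
  then show ?thesis unfolding T_def m_def .
qed

lemma T_DR_eq_travel_time:
  assumes "c > 0" "d > 0" "a < sqrt c"
  shows "T_DR (2 / c) (2 / (c + d)) tA a = travel_time c d (kepler_m d a)"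
  unfolding T_DR_def
  using kepler_direct_arc_travel_time[OF assms] kepler_direct_arc_unique by blast

definition time_density_dm :: "real \<Rightarrow> real \<Rightarrow> real \<Rightarrow> real \<Rightarrow> real" where
  "time_density_dm c d m s =
     4 / (kepler_D c d m s)^2 + 16 * m^2 * (s * (1 - s)) / (kepler_D c d m s)^3"

definition time_density_dm2 :: "real \<Rightarrow> real \<Rightarrow> real \<Rightarrow> real \<Rightarrow> real" where
  "time_density_dm2 c d m s =
     48 * m * (s * (1 - s)) / (kepler_D c d m s)^3 + 96 * m^3 * (s * (1 - s))^2 / (kepler_D c d m s)^4"

lemma kepler_D_has_derivative_m:
  "((\<lambda>m. kepler_D c d m s) has_real_derivative - 2 * m * (s * (1 - s))) (at m)"
  unfolding kepler_D_def by (auto intro!: derivative_eq_intros)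

lemma time_density_has_derivative_m:
  assumes "kepler_D c d m s \<noteq> 0"
  shows "((\<lambda>m. time_density c d m s) has_real_derivative time_density_dm c d m s) (at m)"
  unfolding time_density_def time_density_dm_def
  using assms
  by (auto intro!: derivative_eq_intros kepler_D_has_derivative_m
      simp: field_simps power2_eq_square power3_eq_cube)

lemma time_density_dm_has_derivative_m:
  assumes "kepler_D c d m s \<noteq> 0"
  shows "((\<lambda>m. time_density_dm c d m s) has_real_derivative time_density_dm2 c d m s) (at m)"
  unfolding time_density_dm_def time_density_dm2_def
  using assms
  by (auto intro!: derivative_eq_intros kepler_D_has_derivative_m
      simp: field_simps power2_eq_square power3_eq_cube eval_nat_numeral)

definition travel_time_dm :: "real \<Rightarrow> real \<Rightarrow> real \<Rightarrow> real" where
  "travel_time_dm c d m = integral {0..1} (time_density_dm c d m)"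

definition travel_time_dm2 :: "real \<Rightarrow> real \<Rightarrow> real \<Rightarrow> real" where
  "travel_time_dm2 c d m = integral {0..1} (time_density_dm2 c d m)"

lemma kepler_D_pos_strip:
  assumes "c > 0" "d > 0" "m \<in> {0<..<sqrt c + sqrt (c + d)}" "s \<in> {0..1}"
  shows "kepler_D c d m s > 0"
  using kepler_D_pos[OF assms(1,2) _ assms(4)] assms(3) by simp

lemma integrable_time_densities:
  assumes "c > 0" "d > 0" "m \<in> {0<..<sqrt c + sqrt (c + d)}"
  shows "time_density c d m integrable_on {0..1}"
    and "time_density_dm c d m integrable_on {0..1}"
    and "time_density_dm2 c d m integrable_on {0..1}"
proof -
  have "kepler_D c d m s \<noteq> 0" if "s \<in> {0..1}" for s
    using kepler_D_pos_strip[OF assms that] by simp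
  then have D: "\<forall>s\<in>{0..1}. (kepler_D c d m s)^n \<noteq> 0" for n
    by simp
  have "continuous_on {0..1} (kepler_D c d m)"
    unfolding kepler_D_def by (intro continuous_intros)
  note [continuous_intros] = continuous_on_compose2[OF this]
  show "time_density c d m integrable_on {0..1}"
    "time_density_dm c d m integrable_on {0..1}"
    "time_density_dm2 c d m integrable_on {0..1}"
    unfolding time_density_def[abs_def] time_density_dm_def[abs_def] time_density_dm2_def[abs_def]
    by (intro integrable_continuous_real continuous_intros D; simp)+
qed

lemma travel_time_derivatives:
  assumes c: "c > 0" and d: "d > 0" and m: "m \<in> {0<..<sqrt c + sqrt (c + d)}"
  shows "(travel_time c d has_real_derivative travel_time_dm c d m) (at m)"
    and "(travel_time_dm c d has_real_derivative travel_time_dm2 c d m) (at m)"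
proof -
  define U where "U = {0<..<sqrt c + sqrt (c + d)}"
  have "m \<in> U" "open U" "convex U" using m unfolding U_def by auto
  have D_ne: "kepler_D c d m' s \<noteq> 0" if "m' \<in> U" "s \<in> {0..1}" for m' s
    using kepler_D_pos_strip[OF c d] that unfolding U_def by (metis less_irrefl)
  then have D_pow_ne: "\<forall>p\<in>U \<times> {0..1}. (kepler_D c d (fst p) (snd p))^n \<noteq> 0" for n
    by (auto simp: mem_Times_iff)
  have D_cont: "continuous_on (U \<times> {0..1}) (\<lambda>p. kepler_D c d (fst p) (snd p))"
    unfolding kepler_D_def by (intro continuous_intros)
  note int = integrable_time_densities[OF c d, folded U_def]
  show "(travel_time c d has_real_derivative travel_time_dm c d m) (at m)"
    unfolding travel_time_def[abs_def] travel_time_dm_def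
  proof (rule parametric_integral_has_real_derivative[OF \<open>open U\<close> \<open>convex U\<close> \<open>m \<in> U\<close>])
    show "continuous_on (U \<times> {0..1}) (\<lambda>(m, s). time_density_dm c d m s)"
      unfolding time_density_dm_def case_prod_beta' by (intro continuous_intros D_cont D_pow_ne)
  qed (use D_ne int in \<open>auto intro!: time_density_has_derivative_m\<close>)
  show "(travel_time_dm c d has_real_derivative travel_time_dm2 c d m) (at m)"
    unfolding travel_time_dm_def[abs_def] travel_time_dm2_def
  proof (rule parametric_integral_has_real_derivative[OF \<open>open U\<close> \<open>convex U\<close> \<open>m \<in> U\<close>])
    show "continuous_on (U \<times> {0..1}) (\<lambda>(m, s). time_density_dm2 c d m s)"
      unfolding time_density_dm2_def case_prod_beta' by (intro continuous_intros D_cont D_pow_ne)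
  qed (use D_ne int in \<open>auto intro!: time_density_dm_has_derivative_m\<close>)
qed

lemma travel_time_dm_pos:
  assumes c: "c > 0" and d: "d > 0" and m: "m \<in> {0<..<sqrt c + sqrt (c + d)}"
  shows "travel_time_dm c d m > 0"
proof -
  have "4 / (c + d)^2 \<le> time_density_dm c d m s" if "s \<in> {0..1}" for s
  proof -
    have "4 / (c + d)^2 \<le> 4 / (kepler_D c d m s)^2"
      using kepler_D_pos_strip[OF c d m that] kepler_D_le[of d s c m] d that
      by (intro divide_left_mono power_mono mult_pos_pos) auto
    moreover have "16 * m^2 * (s * (1 - s)) / (kepler_D c d m s)^3 \<ge> 0"
      using kepler_D_pos_strip[OF c d m that] that by auto
    ultimately show ?thesis unfolding time_density_dm_def by linarith
  qed
  then show ?thesis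
    unfolding travel_time_dm_def using c d integrable_time_densities(2)[OF c d m]
    by (intro integral_pos_if_ge_const[of 0 1 "4 / (c + d)^2"]) auto
qed

lemma travel_time_dm2_nonneg:
  assumes c: "c > 0" and d: "d > 0" and m: "m \<in> {0<..<sqrt c + sqrt (c + d)}"
  shows "travel_time_dm2 c d m \<ge> 0"
proof -
  have "time_density_dm2 c d m s \<ge> 0" if "s \<in> {0..1}" for s
    unfolding time_density_dm2_def using kepler_D_pos_strip[OF c d m that] m that by simp
  then show ?thesis
    unfolding travel_time_dm2_def using integrable_time_densities(3)[OF c d m]
    by (intro integral_nonneg) auto
qed

lemma travel_time_kepler_m_second_derivative:
  assumes c: "c > 0" and d: "d > 0"
  shows "\<exists>T1 T2. \<forall>a<sqrt c.
    ((\<lambda>a. travel_time c d (kepler_m d a)) has_real_derivative T1 a) (at a) \<and>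
    (T1 has_real_derivative T2 a) (at a) \<and> T2 a > 0"
proof -
  define m' m'' where "m' a = 1 + a / sqrt (a^2 + d)" and "m'' a = d / ((a^2 + d) * sqrt (a^2 + d))"
    for a
  define T1 where "T1 a = travel_time_dm c d (kepler_m d a) * m' a" for a
  define T2 where "T2 a = travel_time_dm2 c d (kepler_m d a) * m' a * m' a +
    travel_time_dm c d (kepler_m d a) * m'' a" for a
  have "((\<lambda>a. travel_time c d (kepler_m d a)) has_real_derivative T1 a) (at a) \<and>
    (T1 has_real_derivative T2 a) (at a) \<and> T2 a > 0" if "a < sqrt c" for a
  proof (intro conjI)
    have m: "kepler_m d a \<in> {0<..<sqrt c + sqrt (c + d)}"
      using kepler_m_bounds[OF c d that] by auto
    note tt = travel_time_derivatives[OF c d m]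
    note km = kepler_m_has_derivative[OF d, of a, folded m'_def]
      kepler_m_derivative_has_derivative[OF d, of a, folded m'_def m''_def]
    show "((\<lambda>a. travel_time c d (kepler_m d a)) has_real_derivative T1 a) (at a)"
      unfolding T1_def using DERIV_chain2[OF tt(1) km(1)] .
    show "(T1 has_real_derivative T2 a) (at a)"
      unfolding T1_def[abs_def] T2_def
      using DERIV_mult[OF DERIV_chain2[OF tt(2) km(1)] km(2)] by (simp add: algebra_simps)
    have "m' a > 0" "m'' a > 0"
      unfolding m'_def m''_def
      using kepler_m_derivative_pos[OF d] sqrt_square_add_gt_abs[OF d, of a] d
      by (auto intro!: divide_pos_pos mult_pos_pos add_nonneg_pos)
    then show "T2 a > 0"
      unfolding T2_def using travel_time_dm_pos[OF c d m] travel_time_dm2_nonneg[OF c d m]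
      by (simp add: add_nonneg_pos)
  qed
  then show ?thesis by blast
qed

theorem proposition4:
  fixes xA xB tA :: real
  assumes "0 < xB" and "xB < xA"
  defines "vE \<equiv> sqrt (2 / xA)"
  shows "(\<forall>vA<vE. \<exists>!T. kepler_direct_arc xA xB tA vA T)
    \<and> (\<forall>vA<vE. T_DR xA xB tA vA > 0)
    \<and> strictly_convex_on {..<vE} (T_DR xA xB tA)
    \<and> (\<exists>T1 T2 :: real \<Rightarrow> real. \<forall>vA<vE.
          (T_DR xA xB tA has_real_derivative T1 vA) (at vA) \<and>
          (T1 has_real_derivative T2 vA) (at vA) \<and> T2 vA > 0)"
proof -
  define c d where "c = 2 / xA" and "d = 2 / xB - 2 / xA"
  have c: "c > 0" and d: "d > 0" using assms by (auto simp: c_def d_def frac_less2)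
  have xAB: "xA = 2 / c" "xB = 2 / (c + d)" and vE: "vE = sqrt c"
    unfolding c_def d_def vE_def by simp_all
  have T_DR: "T_DR xA xB tA a = travel_time c d (kepler_m d a)" if "a < sqrt c" for a
    unfolding xAB using T_DR_eq_travel_time[OF c d that] .
  have arc: "kepler_direct_arc xA xB tA a (T_DR xA xB tA a)" if "a < sqrt c" for a
    using kepler_direct_arc_travel_time[OF c d that] T_DR[OF that] unfolding xAB by simp
  from travel_time_kepler_m_second_derivative[OF c d]
  obtain T1 T2 where T12: "\<forall>a<sqrt c.
      ((\<lambda>a. travel_time c d (kepler_m d a)) has_real_derivative T1 a) (at a) \<and>
      (T1 has_real_derivative T2 a) (at a) \<and> T2 a > 0"
    by (elim exE) (rule that)
  have T1: "(T_DR xA xB tA has_real_derivative T1 a) (at a)"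
    and T2: "(T1 has_real_derivative T2 a) (at a)" "T2 a > 0" if "a \<in> {..<sqrt c}" for a
  proof -
    from that T12 show "(T1 has_real_derivative T2 a) (at a)" "T2 a > 0" by simp_all
    from that T12 have "((\<lambda>a. travel_time c d (kepler_m d a)) has_real_derivative T1 a) (at a)"
      by simp
    then show "(T_DR xA xB tA has_real_derivative T1 a) (at a)"
      by (rule has_field_derivative_transform_within_open[OF _ open_lessThan that]) (simp add: T_DR)
  qed
  show ?thesis
    unfolding vE
  proof (intro conjI allI impI)
    fix a :: real assume "a < sqrt c"
    show "\<exists>!T. kepler_direct_arc xA xB tA a T"
      using arc[OF \<open>a < sqrt c\<close>] kepler_direct_arc_unique by blast
    show "T_DR xA xB tA a > 0"
      unfolding T_DR[OF \<open>a < sqrt c\<close>]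
      using travel_time_pos[OF c d] kepler_m_bounds[OF c d \<open>a < sqrt c\<close>] by simp
  next
    show "strictly_convex_on {..<sqrt c} (T_DR xA xB tA)"
      by (rule strictly_convex_on_if_second_deriv_pos[OF _ T1 T2]) simp_all
    show "\<exists>T1 T2. \<forall>a<sqrt c. (T_DR xA xB tA has_real_derivative T1 a) (at a) \<and>
        (T1 has_real_derivative T2 a) (at a) \<and> T2 a > 0"
      using T1 T2 by blast
  qed
qed

end
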